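(* Let $\{v_\ell\}_{\ell\ge1}$ be a sequence in the open unit disk $\mathbb{D}$ with $v_\ell\to0$. For each strictly increasing sequence of nonnegative integers $\{N_\ell\}_{\ell\ge1}$ let $\mu$ be the probability measure on $\partial\mathbb{D}$ whose Verblunsky coefficients are $\alpha_n=v_\ell$ if $n=N_\ell$ and $\alpha_n=0$ otherwise, and let $K_n$ be its Christoffel–Darboux kernel. Then the sequence $\{N_\ell\}$ can be chosen sufficiently sparse, in the following sense: for every $\ell$ there is an integer $\widehat N_\ell$ (depending on $N_1,\dots,N_\ell$ and on $\{v_\ell\}$) such that whenever $N_{\ell+1}>\widehat N_\ell$ for all $\ell$, one has $$\frac{K_n\big(e^{i(\theta+\frac{2\pi a}{n})},e^{i(\theta+\frac{2\pi b}{n})}\big)}{K_n(e^{i\theta},e^{i\theta})}\longrightarrow e^{i\pi(a-\bar b)}\frac{\sin(\pi(a-\bar b))}{\pi(a-\bar b)}\quad(n\to\infty)$$ uniformly for $\theta\in[0,2\pi)$ and for $a,b$ in compact subsets of the strip $\{w\in\mathbb{C}:|\mathrm{Im}\,w|<\tfrac12\}$.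
   Context: A probability measure $\mu$ on $\partial\mathbb{D}$ with infinite support is in bijection with its Verblunsky coefficients $\{\alpha_n\}_{n\ge0}\subset\mathbb{D}$, defined via the Szegő recursion $\varphi_{n+1}(z)=\rho_n^{-1}(z\varphi_n(z)-\overline{\alpha_n}\varphi_n^*(z))$, $\varphi_0=1$, $\rho_n=\sqrt{1-|\alpha_n|^2}$, $\varphi_n^*(z)=z^n\overline{\varphi_n(1/\bar z)}$, where $\varphi_n$ are the orthonormal polynomials of $\mu$. The Christoffel–Darboux kernel is $K_n(z,w)=\sum_{k=0}^{n-1}\varphi_k(z)\overline{\varphi_k(w)}$ for complex $z,w$. The right-hand side is interpreted as $1$ when $a-\bar b=0$. *)

theory Defs
  imports "HOL-Analysis.Analysis" "HOL-Computational_Algebra.Polynomial"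
begin

text \<open>Reversed polynomial: for a polynomial p of degree at most n,
  rev_star n p is the polynomial z \<mapsto> z^n * cnj (p (1 / cnj z)).\<close>
definition rev_star :: "nat \<Rightarrow> complex poly \<Rightarrow> complex poly" where
  "rev_star n p = (\<Sum>k\<le>n. monom (cnj (coeff p (n - k))) k)"

text \<open>Orthonormal polynomials on the unit circle generated by the Szego recursion
  from the Verblunsky coefficients alpha.\<close>
fun OPUC :: "(nat \<Rightarrow> complex) \<Rightarrow> nat \<Rightarrow> complex poly" where
  "OPUC \<alpha> 0 = 1"
| "OPUC \<alpha> (Suc n) =
     smult (1 / complex_of_real (sqrt (1 - (cmod (\<alpha> n))\<^sup>2)))
       (monom 1 1 * OPUC \<alpha> n - smult (cnj (\<alpha> n)) (rev_star n (OPUC \<alpha> n)))"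

definition CD_kernel :: "(nat \<Rightarrow> complex) \<Rightarrow> nat \<Rightarrow> complex \<Rightarrow> complex \<Rightarrow> complex" where
  "CD_kernel \<alpha> n z w = (\<Sum>k<n. poly (OPUC \<alpha> k) z * cnj (poly (OPUC \<alpha> k) w))"

definition sparse_verblunsky :: "(nat \<Rightarrow> complex) \<Rightarrow> (nat \<Rightarrow> nat) \<Rightarrow> nat \<Rightarrow> complex" where
  "sparse_verblunsky v N n =
     (if \<exists>l\<ge>1. N l = n then v (THE l. 1 \<le> l \<and> N l = n) else 0)"

definition sine_kernel :: "complex \<Rightarrow> complex" where
  "sine_kernel (z::complex) = (if z = 0 then 1
     else exp (\<i> * pi * z) * sin (of_real pi * z) / (of_real pi * z))"

end

theory Submission
  imports Defs
begin

text \<open>Write \<open>g\<^sub>k(z) = \<phi>\<^sub>k(z) z^(-k)\<close> (\<open>scaled_OPUC\<close>), so that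
  \<open>K\<^sub>n(z, w) = (\<Sum>k<n. (z * cnj w)^k g\<^sub>k(z) cnj (g\<^sub>k(w)))\<close>. For sparse coefficients \<open>g\<^sub>k\<close> does not change
  between consecutive \<open>N l\<close> and changes by \<open>O(|v l|)\<close> at \<open>N l\<close>. Take \<open>n\<close> in a block
  \<open>N j < n \<le> N (j + 1)\<close> and put \<open>P = N (j - 1) + 1\<close>. Choosing \<open>N j\<close> large, given \<open>N 1, \<dots>, N (j - 1)\<close>,
  makes the first \<open>P\<close> terms of \<open>K\<^sub>n\<close> negligible and \<open>g\<^sub>P\<close> almost constant on arcs of length \<open>O(1/n)\<close>.
  Every later term is then close to \<open>|g\<^sub>P(e^(i\<theta>))|^2 (z * cnj w)^k\<close>, so the ratio of kernels is within
  \<open>O(1/j + |v j|)\<close> of the free ratio \<open>(1/n) (\<Sum>k<n. e^(2\<pi>i (a - cnj b) k / n))\<close>, which tends to the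
  sine kernel.\<close>

lemma degree_rev_star: "degree (rev_star n p) \<le> n"
  unfolding rev_star_def
  by (rule degree_sum_le) (auto intro: order.trans[OF degree_monom_le])

lemma poly_rev_star:
  assumes "degree p \<le> n" "z \<noteq> 0"
  shows "poly (rev_star n p) z = z ^ n * cnj (poly p (1 / cnj z))"
proof -
  have "poly (rev_star n p) z = (\<Sum>k\<le>n. cnj (coeff p (n - k)) * z ^ k)"
    unfolding rev_star_def by (simp add: poly_sum poly_monom)
  also have "\<dots> = (\<Sum>i\<le>n. cnj (coeff p i) * z ^ (n - i))"
    by (rule sum.reindex_bij_witness[where i="\<lambda>i. n - i" and j="\<lambda>i. n - i"]) auto
  also have "\<dots> = z ^ n * (\<Sum>i\<le>n. cnj (coeff p i) * (1 / z) ^ i)"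
    unfolding sum_distrib_left
    by (rule sum.cong) (use assms in \<open>auto simp: power_diff field_simps\<close>)
  also have "(\<Sum>i\<le>n. cnj (coeff p i) * (1 / z) ^ i) = cnj (poly p (1 / cnj z))"
    by (subst (2) poly_as_sum_of_monoms'[OF assms(1), symmetric]) (simp add: poly_sum poly_monom)
  finally show ?thesis .
qed

lemma degree_OPUC: "degree (OPUC \<alpha> k) \<le> k"
proof (induction k)
  case (Suc k)
  have "degree (monom 1 1 * OPUC \<alpha> k) \<le> Suc k"
    using Suc by (metis degree_mult_le degree_monom_le add_mono plus_1_eq_Suc order.trans)
  moreover have "degree (smult (cnj (\<alpha> k)) (rev_star k (OPUC \<alpha> k))) \<le> Suc k"
    using degree_rev_star[of k] by (metis degree_smult_le le_SucI order.trans)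
  ultimately show ?case
    by (simp only: OPUC.simps(2)) (meson degree_diff_le degree_smult_le order.trans)
qed simp

definition rho :: "complex \<Rightarrow> real" where
  "rho a = sqrt (1 - (cmod a)\<^sup>2)"

lemma rho_pos: "cmod a < 1 \<Longrightarrow> rho a > 0"
  unfolding rho_def by (simp add: abs_square_less_1)

lemma rho_le_1: "rho a \<le> 1"
  unfolding rho_def by simp

lemma one_minus_norm_le_rho:
  assumes "cmod a \<le> 1"
  shows "1 - cmod a \<le> rho a"
proof -
  have "(1 - cmod a)\<^sup>2 \<le> 1 - (cmod a)\<^sup>2"
    using assms norm_ge_zero[of a] by (simp add: power2_eq_square algebra_simps mult_left_le)
  then show ?thesis
    unfolding rho_def using assms by (metis abs_of_nonneg diff_ge_0_iff_ge real_sqrt_abs real_sqrt_le_mono)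
qed

definition scaled_OPUC :: "(nat \<Rightarrow> complex) \<Rightarrow> nat \<Rightarrow> complex \<Rightarrow> complex" where
  "scaled_OPUC \<alpha> k z = poly (OPUC \<alpha> k) z / z ^ k"

lemma scaled_OPUC_0 [simp]: "scaled_OPUC \<alpha> 0 z = 1"
  by (simp add: scaled_OPUC_def)

lemma scaled_OPUC_Suc:
  assumes "z \<noteq> 0"
  shows "scaled_OPUC \<alpha> (Suc k) z =
    (scaled_OPUC \<alpha> k z - cnj (\<alpha> k) * cnj (scaled_OPUC \<alpha> k (1 / cnj z)) / z ^ Suc k) / rho (\<alpha> k)"
proof -
  have "poly (rev_star k (OPUC \<alpha> k)) z = z ^ k * cnj (scaled_OPUC \<alpha> k (1 / cnj z)) * cnj (1 / cnj z) ^ k"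
    using assms by (simp add: poly_rev_star[OF degree_OPUC] scaled_OPUC_def field_simps)
  then show ?thesis
    using assms by (simp add: scaled_OPUC_def rho_def poly_monom field_simps)
qed

lemma OPUC_cong: "(\<And>j. j < k \<Longrightarrow> \<alpha> j = \<beta> j) \<Longrightarrow> OPUC \<alpha> k = OPUC \<beta> k"
  by (induction k) auto

lemma scaled_OPUC_cong: "(\<And>j. j < k \<Longrightarrow> \<alpha> j = \<beta> j) \<Longrightarrow> scaled_OPUC \<alpha> k = scaled_OPUC \<beta> k"
  using OPUC_cong[of k \<alpha> \<beta>] by (simp add: scaled_OPUC_def fun_eq_iff)

lemma scaled_OPUC_eq_if_zero_between:
  assumes "\<And>j. m \<le> j \<Longrightarrow> j < k \<Longrightarrow> \<alpha> j = 0" "m \<le> k" "z \<noteq> 0"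
  shows "scaled_OPUC \<alpha> k z = scaled_OPUC \<alpha> m z"
  using assms
proof (induction k)
  case (Suc k)
  then show ?case
    by (cases "m = Suc k") (simp_all add: scaled_OPUC_Suc rho_def)
qed simp

lemma CD_kernel_eq_scaled_OPUC:
  assumes "z \<noteq> 0" "w \<noteq> 0"
  shows "CD_kernel \<alpha> n z w = (\<Sum>k<n. (z * cnj w) ^ k * (scaled_OPUC \<alpha> k z * cnj (scaled_OPUC \<alpha> k w)))"
  unfolding CD_kernel_def scaled_OPUC_def using assms
  by (intro sum.cong) (auto simp: field_simps power_mult_distrib)

lemma continuous_on_scaled_OPUC: "continuous_on (- {0}) (scaled_OPUC \<alpha> k)"
  unfolding scaled_OPUC_def by (intro continuous_intros) auto

lemma inverse_cnj_unimodular: "cmod z = 1 \<Longrightarrow> 1 / cnj z = z"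
  by (simp add: divide_conv_cnj)

lemma norm_scaled_OPUC_ge:
  assumes "\<And>j. j < k \<Longrightarrow> cmod (\<alpha> j) < 1" "cmod z = 1"
  shows "(\<Prod>j<k. 1 - cmod (\<alpha> j)) \<le> cmod (scaled_OPUC \<alpha> k z)"
  using assms(1)
proof (induction k)
  case (Suc k)
  let ?a = "\<alpha> k" and ?g = "scaled_OPUC \<alpha> k z"
  have z: "z \<noteq> 0"
    using assms(2) by auto
  have a: "cmod ?a < 1" and IH: "(\<Prod>j<k. 1 - cmod (\<alpha> j)) \<le> cmod ?g"
    using Suc by auto
  have "(1 - cmod ?a) * cmod ?g \<le> cmod ?g - cmod (cnj ?a * cnj ?g / z ^ Suc k)"
    using assms(2) by (simp add: norm_mult norm_divide norm_power algebra_simps)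
  also have "\<dots> \<le> cmod (?g - cnj ?a * cnj ?g / z ^ Suc k)"
    by (rule norm_triangle_ineq2)
  also have "\<dots> \<le> cmod (?g - cnj ?a * cnj ?g / z ^ Suc k) / rho ?a"
    using rho_pos[OF a] rho_le_1[of ?a] by (simp add: le_divide_eq mult_left_le)
  also have "\<dots> = cmod (scaled_OPUC \<alpha> (Suc k) z)"
    using assms(2) rho_pos[OF a]
    by (simp add: scaled_OPUC_Suc[OF z] inverse_cnj_unimodular norm_divide norm_ge_zero)
  finally have "(1 - cmod ?a) * cmod ?g \<le> cmod (scaled_OPUC \<alpha> (Suc k) z)" .
  moreover have "(1 - cmod ?a) * (\<Prod>j<k. 1 - cmod (\<alpha> j)) \<le> (1 - cmod ?a) * cmod ?g"
    using IH a by (intro mult_left_mono) auto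
  ultimately show ?case by (simp add: mult.commute)
qed simp

lemma scaled_OPUC_nonzero:
  assumes "\<And>j. j < k \<Longrightarrow> cmod (\<alpha> j) < 1" "cmod z = 1"
  shows "scaled_OPUC \<alpha> k z \<noteq> 0"
proof -
  have "0 < (\<Prod>j<k. 1 - cmod (\<alpha> j))"
    using assms(1) by (intro prod_pos) auto
  then show ?thesis
    using norm_scaled_OPUC_ge[of k \<alpha> z] assms by auto
qed

text \<open>\<open>exp (\<i> * \<theta>) * rot n a\<close> is the point \<open>e^(i(\<theta> + 2\<pi>a/n))\<close> of the statement; for
  non-real \<open>a\<close> it lies off the unit circle.\<close>
definition rot :: "nat \<Rightarrow> complex \<Rightarrow> complex" where
  "rot n a = exp (2 * pi * \<i> * a / n)"

lemma rot_0 [simp]: "rot n 0 = 1"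
  by (simp add: rot_def)

lemma rot_nonzero [simp]: "rot n a \<noteq> 0"
  by (simp add: rot_def)

lemma rot_add: "rot n (a + b) = rot n a * rot n b"
  by (simp add: rot_def exp_add[symmetric] add_divide_distrib distrib_left)

lemma rot_minus: "rot n (- a) = 1 / rot n a"
  by (simp add: rot_def exp_minus inverse_eq_divide)

lemma cnj_rot: "cnj (rot n a) = rot n (- cnj a)"
  unfolding rot_def exp_cnj by simp

lemma rot_mult_cnj: "rot n a * cnj (rot n b) = rot n (a - cnj b)"
  by (simp add: cnj_rot rot_add[symmetric])

lemma inverse_cnj_rot: "1 / cnj (rot n a) = rot n (cnj a)"
  by (simp add: cnj_rot rot_minus)

lemma exp_add_rot:
  "exp (\<i> * (of_real \<theta> + of_real (2 * pi) * a / of_nat n)) = exp (\<i> * of_real \<theta>) * rot n a"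
  by (simp add: rot_def exp_add[symmetric] algebra_simps)

lemma norm_rot_power_le:
  assumes "k \<le> n" "cmod a \<le> R"
  shows "cmod (rot n a) ^ k \<le> exp (2 * pi * R)"
proof -
  have kn: "0 \<le> real k / n" "real k / n \<le> 1"
    using assms(1) by (auto simp: divide_le_eq_1)
  have "real k / n * (- Im a) \<le> real k / n * cmod a"
    using abs_Im_le_cmod[of a] kn(1) by (intro mult_left_mono) auto
  also have "\<dots> \<le> 1 * R"
    using kn assms(2) by (intro mult_mono) auto
  finally have "real k * (- Im a / n) \<le> R"
    by simp
  then have "2 * pi * (real k * (- Im a / n)) \<le> 2 * pi * R"
    by (intro mult_left_mono) auto
  moreover have "real k * (- 2 * pi * Im a / n) = 2 * pi * (real k * (- Im a / n))"
    by simp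
  ultimately have "real k * (- 2 * pi * Im a / n) \<le> 2 * pi * R"
    by linarith
  moreover have "cmod (rot n a) ^ k = exp (real k * (- 2 * pi * Im a / n))"
    by (simp add: rot_def norm_exp_eq_Re Re_divide_of_nat exp_of_nat_mult[symmetric])
  ultimately show ?thesis
    by simp
qed

lemma eventually_uniformly_near_zero:
  fixes f :: "complex \<Rightarrow> 'a::metric_space"
  assumes "isCont f 0" "e > 0"
  shows "\<forall>\<^sub>F n in sequentially. \<forall>z. cmod z \<le> R \<longrightarrow> dist (f (z / of_nat n)) (f 0) < e"
proof -
  obtain d where d: "d > 0" "\<And>y. dist y 0 < d \<Longrightarrow> dist (f y) (f 0) < e"
    using assms unfolding continuous_at_eps_delta by blast
  have "\<forall>\<^sub>F n in sequentially. \<bar>R\<bar> / real n < d"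
    using lim_const_over_n[of "\<bar>R\<bar>"] d(1) by (rule order_tendstoD(2))
  then show ?thesis
  proof eventually_elim
    case (elim n)
    have "cmod (z / of_nat n) < d" if "cmod z \<le> R" for z
      using that abs_ge_self[of R] elim divide_right_mono[of "cmod z" "\<bar>R\<bar>" "real n"] by (simp add: norm_divide)
    then show ?case
      using d(2) by simp
  qed
qed

lemma eventually_rot_close_1:
  assumes "e > 0"
  shows "\<forall>\<^sub>F n in sequentially. \<forall>a. cmod a \<le> R \<longrightarrow> cmod (rot n a - 1) < e"
proof -
  have "isCont (\<lambda>z. exp (2 * pi * \<i> * z)) 0"
    by (intro continuous_intros)
  from eventually_uniformly_near_zero[OF this assms, of R] show ?thesis
    by (simp add: rot_def dist_norm)
qed

definition exp_diff_quot :: "complex \<Rightarrow> complex" where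
  "exp_diff_quot t = (if t = 0 then 1 else (exp t - 1) / t)"

lemma isCont_exp_diff_quot_0: "isCont exp_diff_quot 0"
proof -
  have "((\<lambda>t. (exp t - 1) / t) \<longlongrightarrow> 1) (at (0::complex))"
    using DERIV_exp[of 0] by (simp add: has_field_derivative_iff)
  then have "(exp_diff_quot \<longlongrightarrow> 1) (at 0)"
    by (rule Lim_transform_eventually) (auto simp: exp_diff_quot_def eventually_at_filter)
  then show ?thesis
    by (simp add: isCont_def exp_diff_quot_def)
qed

lemma sine_kernel_eq_exp_diff_quot: "sine_kernel s = exp_diff_quot (2 * pi * \<i> * s)"
proof (cases "s = 0")
  case False
  have "exp (\<i> * pi * s) * (exp (\<i> * pi * s) - exp (- (\<i> * pi * s))) = exp (2 * pi * \<i> * s) - 1"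
    by (simp add: algebra_simps exp_add[symmetric] exp_minus_inverse)
  then show ?thesis
    using False by (simp add: sine_kernel_def exp_diff_quot_def sin_exp_eq field_simps)
qed (simp add: sine_kernel_def exp_diff_quot_def)

lemma geometric_sum_exp_diff_quot:
  assumes "n > 0"
  shows "(\<Sum>k<n. exp (t / n) ^ k) * exp_diff_quot (t / n) = n * exp_diff_quot t"
proof (cases "t = 0")
  case False
  have "exp (t / n) ^ n = exp t"
    using assms by (simp flip: exp_of_nat_mult)
  then have "(\<Sum>k<n. exp (t / n) ^ k) * (exp (t / n) - 1) = exp t - 1"
    by (metis power_diff_1_eq mult.commute)
  moreover have "t / n \<noteq> 0"
    using False assms by simp
  ultimately have "(\<Sum>k<n. exp (t / n) ^ k) * exp_diff_quot (t / n) = (exp t - 1) / (t / n)"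
    by (simp add: exp_diff_quot_def)
  then show ?thesis
    using False assms by (simp add: exp_diff_quot_def)
qed (simp add: exp_diff_quot_def)

lemma norm_geometric_mean_rot_le:
  assumes "0 < n" "cmod s \<le> R"
  shows "cmod ((\<Sum>k<n. rot n s ^ k) / n) \<le> exp (2 * pi * R)"
proof -
  have "cmod (\<Sum>k<n. rot n s ^ k) \<le> (\<Sum>k<n. exp (2 * pi * R))"
    using norm_rot_power_le[OF _ assms(2)] by (intro order.trans[OF norm_sum] sum_mono) (simp add: norm_power)
  then show ?thesis
    using assms(1) by (simp add: norm_divide field_simps)
qed

lemma geometric_mean_rot_mult_exp_diff_quot:
  assumes "0 < n"
  shows "(\<Sum>k<n. rot n s ^ k) / n * exp_diff_quot (2 * pi * \<i> * s / n) = sine_kernel s"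
  using geometric_sum_exp_diff_quot[of n "2 * pi * \<i> * s"] assms
  by (simp add: rot_def sine_kernel_eq_exp_diff_quot field_simps)

text \<open>The case \<open>\<alpha> = 0\<close>, where \<open>K\<^sub>n(z, w) = (\<Sum>k<n. (z * cnj w) ^ k)\<close>.\<close>
lemma uniform_limit_geometric_mean_rot:
  "uniform_limit (cball 0 R) (\<lambda>n s. (\<Sum>k<n. rot n s ^ k) / n) sine_kernel sequentially"
proof (rule uniform_limitI)
  fix e :: real assume e: "e > 0"
  define Q where "Q = exp (2 * pi * R)"
  have Q: "Q > 0"
    by (simp add: Q_def)
  have "isCont (\<lambda>z. 2 * pi * \<i> * z) (0 :: complex)"
    by (intro continuous_intros)
  from isCont_o2[OF this] have "isCont (\<lambda>z. exp_diff_quot (2 * pi * \<i> * z)) 0"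
    using isCont_exp_diff_quot_0 by simp
  from eventually_uniformly_near_zero[OF this, of "e / Q" R]
  have "\<forall>\<^sub>F n in sequentially. \<forall>s. cmod s \<le> R \<longrightarrow> cmod (exp_diff_quot (2 * pi * \<i> * s / n) - 1) < e / Q"
    using e Q by (simp add: dist_norm exp_diff_quot_def)
  then show "\<forall>\<^sub>F n in sequentially. \<forall>s\<in>cball 0 R. dist ((\<Sum>k<n. rot n s ^ k) / n) (sine_kernel s) < e"
    using eventually_gt_at_top[of 0]
  proof eventually_elim
    case (elim n)
    show ?case
    proof
      fix s :: complex assume "s \<in> cball 0 R"
      then have s: "cmod s \<le> R" by simp
      define A where "A = (\<Sum>k<n. rot n s ^ k) / n"
      define E where "E = exp_diff_quot (2 * pi * \<i> * s / n)"
      have "A * E = sine_kernel s"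
        unfolding A_def E_def by (rule geometric_mean_rot_mult_exp_diff_quot[OF elim(2)])
      then have "A - sine_kernel s = A * (1 - E)"
        by (simp add: algebra_simps)
      also have "cmod \<dots> \<le> Q * cmod (E - 1)"
        unfolding norm_mult norm_minus_commute[of 1]
        using norm_geometric_mean_rot_le[OF elim(2) s] by (intro mult_right_mono) (auto simp: A_def Q_def)
      also have "\<dots> < Q * (e / Q)"
        using elim s Q by (intro mult_strict_left_mono) (auto simp: E_def)
      finally show "dist ((\<Sum>k<n. rot n s ^ k) / n) (sine_kernel s) < e"
        using Q by (simp add: A_def dist_norm)
    qed
  qed
qed

lemma norm_mult_cnj_sub_le:
  fixes x y G :: complex
  assumes "cmod (x - G) \<le> \<tau> * cmod G" "cmod (y - G) \<le> \<tau> * cmod G" "0 \<le> \<tau>" "\<tau> \<le> 1"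
  shows "cmod (x * cnj y - G * cnj G) \<le> 3 * \<tau> * (cmod G)\<^sup>2"
proof -
  have e: "x * cnj y - G * cnj G = (x - G) * cnj y + G * cnj (y - G)"
    by (simp add: algebra_simps)
  have "cmod ((x - G) * cnj y) \<le> \<tau> * cmod G * (2 * cmod G)"
  proof -
    have "cmod y \<le> 2 * cmod G"
      using assms(2-4) norm_triangle_ineq2[of y G] mult_left_le_one_le[of "cmod G" \<tau>] by simp
    then show ?thesis
      using assms(1) by (simp add: norm_mult mult_mono')
  qed
  moreover have "cmod (G * cnj (y - G)) \<le> cmod G * (\<tau> * cmod G)"
    unfolding norm_mult complex_mod_cnj by (rule mult_left_mono[OF assms(2) norm_ge_zero])
  ultimately have "cmod (x * cnj y - G * cnj G) \<le> \<tau> * cmod G * (2 * cmod G) + cmod G * (\<tau> * cmod G)"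
    using norm_triangle_ineq[of "(x - G) * cnj y" "G * cnj (y - G)"] unfolding e by linarith
  then show ?thesis
    by (simp add: power2_eq_square algebra_simps)
qed

lemma norm_weighted_sum_sub_le:
  fixes gz gw :: "nat \<Rightarrow> complex" and q G :: complex
  assumes "0 < n" "P \<le> n" "\<And>k. k < n \<Longrightarrow> cmod (q ^ k) \<le> Q"
    and head: "(\<Sum>k<P. cmod (gz k) * cmod (gw k) + (cmod G)\<^sup>2) \<le> \<beta> * (cmod G)\<^sup>2 * n"
    and tail: "\<And>k. P \<le> k \<Longrightarrow> k < n \<Longrightarrow> cmod (gz k - G) \<le> \<tau> * cmod G \<and> cmod (gw k - G) \<le> \<tau> * cmod G"
    and "0 \<le> \<tau>" "\<tau> \<le> 1"
  shows "cmod ((\<Sum>k<n. q ^ k * (gz k * cnj (gw k))) - (cmod G)\<^sup>2 * (\<Sum>k<n. q ^ k))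
           \<le> Q * (\<beta> + 3 * \<tau>) * (cmod G)\<^sup>2 * n"
proof -
  define d where "d k = cmod (q ^ k * (gz k * cnj (gw k) - G * cnj G))" for k
  have Q: "0 \<le> Q"
    using assms(3)[of 0] assms(1) by simp
  have "(\<Sum>k<P. d k) \<le> (\<Sum>k<P. Q * (cmod (gz k) * cmod (gw k) + (cmod G)\<^sup>2))"
  proof (rule sum_mono)
    fix k assume "k \<in> {..<P}"
    then have "cmod (q ^ k) \<le> Q" using assms(2,3) by simp
    moreover have "cmod (gz k * cnj (gw k) - G * cnj G) \<le> cmod (gz k) * cmod (gw k) + (cmod G)\<^sup>2"
      using norm_triangle_ineq4[of "gz k * cnj (gw k)" "G * cnj G"] by (simp add: norm_mult power2_eq_square)
    ultimately show "d k \<le> Q * (cmod (gz k) * cmod (gw k) + (cmod G)\<^sup>2)"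
      unfolding d_def norm_mult using Q by (intro mult_mono) auto
  qed
  also have "\<dots> \<le> Q * (\<beta> * (cmod G)\<^sup>2 * n)"
    using head Q by (simp add: sum_distrib_left[symmetric] mult_left_mono)
  finally have h: "(\<Sum>k<P. d k) \<le> Q * \<beta> * (cmod G)\<^sup>2 * n"
    by simp
  have "(\<Sum>k\<in>{P..<n}. d k) \<le> of_nat (card {P..<n}) * (Q * (3 * \<tau> * (cmod G)\<^sup>2))"
  proof (rule sum_bounded_above)
    fix k assume "k \<in> {P..<n}"
    then have "cmod (q ^ k) \<le> Q" "cmod (gz k * cnj (gw k) - G * cnj G) \<le> 3 * \<tau> * (cmod G)\<^sup>2"
      using assms(3) tail assms(6,7) by (auto intro: norm_mult_cnj_sub_le)
    then show "d k \<le> Q * (3 * \<tau> * (cmod G)\<^sup>2)"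
      unfolding d_def norm_mult using Q by (intro mult_mono) auto
  qed
  also have "\<dots> \<le> n * (Q * (3 * \<tau> * (cmod G)\<^sup>2))"
    using Q assms(6) by (intro mult_right_mono) auto
  finally have t: "(\<Sum>k\<in>{P..<n}. d k) \<le> Q * 3 * \<tau> * (cmod G)\<^sup>2 * n"
    by (simp add: algebra_simps)
  have "(\<Sum>k<n. q ^ k * (gz k * cnj (gw k))) - (cmod G)\<^sup>2 * (\<Sum>k<n. q ^ k)
        = (\<Sum>k<n. q ^ k * (gz k * cnj (gw k) - G * cnj G))"
    using complex_norm_square[of G] by (simp add: sum_distrib_left sum_subtractf algebra_simps)
  also have "cmod \<dots> \<le> (\<Sum>k<n. d k)"
    unfolding d_def by (rule norm_sum)
  also have "\<dots> = (\<Sum>k<P. d k) + (\<Sum>k\<in>{P..<n}. d k)"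
    using assms(2) by (simp add: lessThan_atLeast0 sum.atLeastLessThan_concat)
  finally show ?thesis
    using h t by (simp add: algebra_simps)
qed

lemma norm_quotient_sub_le:
  fixes K S A :: complex
  assumes "cmod (K - D * A) \<le> Q * \<kappa> * D" "cmod (S - D) \<le> \<kappa> * D" "cmod A \<le> Q"
    and "\<kappa> \<le> 1/2" "D > 0"
  shows "cmod (K / S - A) \<le> 4 * Q * \<kappa>"
proof -
  have "D - \<kappa> * D \<le> cmod S"
    using assms(2,5) norm_triangle_ineq3[of S D] by (simp add: norm_minus_commute)
  moreover have "\<kappa> * D \<le> D / 2"
    using assms(4,5) by simp
  ultimately have S: "D / 2 \<le> cmod S"
    by linarith
  have "K - A * S = (K - D * A) - A * (S - D)"
    by (simp add: algebra_simps)
  then have "cmod (K - A * S) \<le> cmod (K - D * A) + cmod (A * (S - D))"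
    by (metis norm_triangle_ineq4)
  moreover have "cmod (A * (S - D)) \<le> Q * (\<kappa> * D)"
    unfolding norm_mult using assms(2,3) order.trans[OF norm_ge_zero assms(3)] by (intro mult_mono) auto
  ultimately have num: "cmod (K - A * S) \<le> 2 * Q * \<kappa> * D"
    using assms(1) by simp
  have "S \<noteq> 0"
    using S assms(5) by auto
  then have "cmod (K / S - A) = cmod (K - A * S) / cmod S"
    by (simp add: norm_divide[symmetric] diff_divide_distrib)
  also have "\<dots> \<le> (2 * Q * \<kappa> * D) / (D / 2)"
    using S assms(5) num by (intro frac_le order.trans[OF norm_ge_zero num]) auto
  also have "\<dots> = 4 * Q * \<kappa>"
    using assms(5) by simp
  finally show ?thesis .
qed

lemma norm_ratio_sub_geometric_mean_le:
  fixes gz gw gs :: "nat \<Rightarrow> complex" and q G :: complex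
  assumes "0 < n" "P \<le> n" "G \<noteq> 0" "\<And>k. k < n \<Longrightarrow> cmod (q ^ k) \<le> Q"
    and "(\<Sum>k<P. cmod (gz k) * cmod (gw k) + (cmod G)\<^sup>2) \<le> \<beta> * (cmod G)\<^sup>2 * n"
    and "(\<Sum>k<P. cmod (gs k) * cmod (gs k) + (cmod G)\<^sup>2) \<le> \<beta> * (cmod G)\<^sup>2 * n"
    and "\<And>k. P \<le> k \<Longrightarrow> k < n \<Longrightarrow> cmod (gz k - G) \<le> \<tau> * cmod G \<and> cmod (gw k - G) \<le> \<tau> * cmod G"
    and "\<And>k. P \<le> k \<Longrightarrow> k < n \<Longrightarrow> cmod (gs k - G) \<le> \<tau> * cmod G"
    and "0 \<le> \<tau>" "\<tau> \<le> 1" "\<beta> + 3 * \<tau> \<le> 1/2"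
  shows "cmod ((\<Sum>k<n. q ^ k * (gz k * cnj (gw k))) / (\<Sum>k<n. gs k * cnj (gs k))
              - (\<Sum>k<n. q ^ k) / n) \<le> 4 * Q * (\<beta> + 3 * \<tau>)"
proof (rule norm_quotient_sub_le)
  define D where "D = (cmod G)\<^sup>2 * n"
  show "D > 0"
    using assms(1,3) by (simp add: D_def)
  show "cmod ((\<Sum>k<n. q ^ k * (gz k * cnj (gw k))) - D * ((\<Sum>k<n. q ^ k) / n))
      \<le> Q * (\<beta> + 3 * \<tau>) * D"
    using norm_weighted_sum_sub_le[OF assms(1,2,4,5,7,9,10)] assms(1)
    by (simp add: D_def algebra_simps)
  have "cmod ((\<Sum>k<n. (1::complex) ^ k * (gs k * cnj (gs k))) - (cmod G)\<^sup>2 * (\<Sum>k<n. (1::complex) ^ k))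
      \<le> 1 * (\<beta> + 3 * \<tau>) * (cmod G)\<^sup>2 * n"
    using assms(8) by (intro norm_weighted_sum_sub_le[OF assms(1,2) _ assms(6) _ assms(9,10)]) auto
  then show "cmod ((\<Sum>k<n. gs k * cnj (gs k)) - D) \<le> (\<beta> + 3 * \<tau>) * D"
    by (simp add: D_def mult.assoc)
  show "cmod ((\<Sum>k<n. q ^ k) / n) \<le> Q"
  proof -
    have "cmod (\<Sum>k<n. q ^ k) \<le> (\<Sum>k<n. Q)"
      using assms(4) by (intro order.trans[OF norm_sum] sum_mono) auto
    then show ?thesis
      using assms(1) by (simp add: norm_divide field_simps)
  qed
qed (use assms(11) in simp)

lemma norm_szego_step_sub_le:
  fixes A B G c w :: complex
  assumes "cmod (A - G) \<le> \<delta> * cmod G" "cmod (B - G) \<le> \<delta> * cmod G" "\<delta> \<le> 1"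
    and "cmod c \<le> 1/2" "1 - cmod c \<le> \<rho>" "\<rho> \<le> 1" "cmod w \<le> e"
  shows "cmod ((A - cnj c * cnj B * w) / \<rho> - G) \<le> (\<delta> + 4 * cmod c * (1 + e)) * cmod G"
proof -
  have \<rho>: "1/2 \<le> \<rho>"
    using assms(4,5) by linarith
  have AB: "cmod A \<le> 2 * cmod G" "cmod B \<le> 2 * cmod G"
    using assms(1-3) norm_triangle_ineq2[of A G] norm_triangle_ineq2[of B G]
      mult_right_mono[OF assms(3) norm_ge_zero[of G]] by auto
  have "(1 - \<rho>) / \<rho> \<le> cmod c / (1/2)"
    using assms(5) \<rho> by (intro frac_le) auto
  then have "cmod (A * ((1 - \<rho>) / \<rho>)) \<le> 2 * cmod G * (2 * cmod c)"
    unfolding norm_mult norm_of_real using assms(6) \<rho> AB(1) by (intro mult_mono) auto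
  moreover have "cmod (cnj c * cnj B * w / \<rho>) \<le> cmod c * (2 * cmod G) * e * 2"
  proof -
    have "1 / \<rho> \<le> 2"
      using \<rho> by (simp add: field_simps)
    then have "cmod c * cmod B * cmod w * (1 / \<rho>) \<le> cmod c * (2 * cmod G) * e * 2"
      using AB(2) assms(7) order.trans[OF norm_ge_zero assms(7)] \<rho>
      by (intro mult_mono) auto
    then show ?thesis
      using \<rho> by (simp add: norm_mult norm_divide)
  qed
  ultimately have bound: "cmod (A * ((1 - \<rho>) / \<rho>) + (A - G) - cnj c * cnj B * w / \<rho>)
      \<le> 2 * cmod G * (2 * cmod c) + \<delta> * cmod G + cmod c * (2 * cmod G) * e * 2"
    using assms(1) norm_triangle_ineq[of "A * ((1 - \<rho>) / \<rho>)" "A - G"]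
      norm_triangle_ineq4[of "A * ((1 - \<rho>) / \<rho>) + (A - G)" "cnj c * cnj B * w / \<rho>"]
    by linarith
  have "complex_of_real \<rho> \<noteq> 0"
    using \<rho> by auto
  then have "A * ((1 - \<rho>) / \<rho>) + (A - G) - cnj c * cnj B * w / \<rho> = (A - cnj c * cnj B * w) / \<rho> - G"
    by (simp add: field_simps)
  then show ?thesis
    using bound by (simp add: algebra_simps)
qed

lemma scaled_OPUC_across_single_coefficient:
  assumes zero: "\<And>j. P \<le> j \<Longrightarrow> j < k \<Longrightarrow> j \<noteq> M \<Longrightarrow> \<alpha> j = 0"
    and "P \<le> M" "M < k" "x \<noteq> 0"
  shows "scaled_OPUC \<alpha> k x =
    (scaled_OPUC \<alpha> P x - cnj (\<alpha> M) * cnj (scaled_OPUC \<alpha> P (1 / cnj x)) / x ^ Suc M) / rho (\<alpha> M)"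
proof -
  have "scaled_OPUC \<alpha> k x = scaled_OPUC \<alpha> (Suc M) x"
    using zero assms(2-4) by (intro scaled_OPUC_eq_if_zero_between) auto
  moreover have "scaled_OPUC \<alpha> M z = scaled_OPUC \<alpha> P z" if "z \<noteq> 0" for z
    using zero assms(2,3) that by (intro scaled_OPUC_eq_if_zero_between) auto
  ultimately show ?thesis
    using assms(4) by (simp add: scaled_OPUC_Suc)
qed

text \<open>Inside a block \<open>P \<le> k < n\<close> whose only nonzero coefficient is \<open>\<alpha>\<^sub>M\<close>, the function
  \<open>scaled_OPUC \<alpha> k\<close> is \<open>scaled_OPUC \<alpha> P\<close> up to \<open>M\<close> and one Szego step of it after \<open>M\<close>.\<close>
lemma norm_scaled_OPUC_sub_le_on_block:
  assumes zero: "\<And>j. P \<le> j \<Longrightarrow> j < n \<Longrightarrow> j \<noteq> M \<Longrightarrow> \<alpha> j = 0"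
    and "P \<le> M" "M < n" "cmod (\<alpha> M) \<le> 1/2" "cmod \<zeta> = 1" "cmod a \<le> R"
    and close: "\<And>a'. cmod a' \<le> R \<Longrightarrow>
      cmod (scaled_OPUC \<alpha> P (\<zeta> * rot n a') - scaled_OPUC \<alpha> P \<zeta>) \<le> \<delta> * cmod (scaled_OPUC \<alpha> P \<zeta>)"
    and "\<delta> \<le> 1" "P \<le> k" "k < n"
  shows "cmod (scaled_OPUC \<alpha> k (\<zeta> * rot n a) - scaled_OPUC \<alpha> P \<zeta>)
           \<le> (\<delta> + 4 * cmod (\<alpha> M) * (1 + exp (2 * pi * R))) * cmod (scaled_OPUC \<alpha> P \<zeta>)"
proof -
  define x where "x = \<zeta> * rot n a"
  define G where "G = scaled_OPUC \<alpha> P \<zeta>"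
  have x: "x \<noteq> 0"
    using assms(5) by (auto simp: x_def)
  have A: "cmod (scaled_OPUC \<alpha> P x - G) \<le> \<delta> * cmod G"
    using close assms(6) by (simp add: x_def G_def)
  show ?thesis
  proof (cases "k \<le> M")
    case True
    then have "scaled_OPUC \<alpha> k x = scaled_OPUC \<alpha> P x"
      using zero assms(3,9) x by (intro scaled_OPUC_eq_if_zero_between) auto
    then show ?thesis
      using A mult_right_mono[of 0 "4 * cmod (\<alpha> M) * (1 + exp (2 * pi * R))" "cmod G"]
      by (simp add: x_def G_def algebra_simps add_increasing2)
  next
    case False
    have "1 / cnj x = (1 / cnj \<zeta>) * (1 / cnj (rot n a))"
      by (simp add: x_def)
    then have "1 / cnj x = \<zeta> * rot n (cnj a)"
      by (simp add: inverse_cnj_rot inverse_cnj_unimodular[OF assms(5)])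
    then have B: "cmod (scaled_OPUC \<alpha> P (1 / cnj x) - G) \<le> \<delta> * cmod G"
      using close assms(6) by (simp add: G_def)
    have "cmod (1 / x ^ Suc M) = cmod (rot n (- a)) ^ Suc M"
      using assms(5) by (simp add: x_def rot_minus norm_mult norm_divide norm_power power_one_over)
    also have "\<dots> \<le> exp (2 * pi * R)"
      using assms(3,6) by (intro norm_rot_power_le) auto
    finally have "cmod (1 / x ^ Suc M) \<le> exp (2 * pi * R)" .
    moreover have "scaled_OPUC \<alpha> k x =
      (scaled_OPUC \<alpha> P x - cnj (\<alpha> M) * cnj (scaled_OPUC \<alpha> P (1 / cnj x)) / x ^ Suc M) / rho (\<alpha> M)"
      using zero False assms(2,10) x by (intro scaled_OPUC_across_single_coefficient) auto
    ultimately show ?thesis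
      unfolding x_def[symmetric] G_def[symmetric]
      using A B assms(4,8) one_minus_norm_le_rho[of "\<alpha> M"] rho_le_1[of "\<alpha> M"]
        norm_szego_step_sub_le[of _ G \<delta> "scaled_OPUC \<alpha> P (1 / cnj x)" "\<alpha> M" "rho (\<alpha> M)" "1 / x ^ Suc M"]
      by simp
  qed
qed

lemma eventually_uniformly_close_on_circle:
  fixes f :: "complex \<Rightarrow> 'a::metric_space"
  assumes "continuous_on (- {0}) f" "e > 0"
  shows "\<forall>\<^sub>F n in sequentially. \<forall>\<zeta> a. cmod \<zeta> = 1 \<longrightarrow> cmod a \<le> R \<longrightarrow> dist (f (\<zeta> * rot n a)) (f \<zeta>) < e"
proof -
  define K where "K = cball (0::complex) 2 - ball 0 (1/2)"
  have "uniformly_continuous_on K f"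
    unfolding K_def
    by (intro compact_uniformly_continuous continuous_on_subset[OF assms(1)] compact_diff) auto
  then obtain d where d: "d > 0" "\<And>x y. x \<in> K \<Longrightarrow> y \<in> K \<Longrightarrow> dist y x < d \<Longrightarrow> dist (f y) (f x) < e"
    using assms(2) unfolding uniformly_continuous_on_def by metis
  have "min d (1/2) > 0"
    using d(1) by simp
  from eventually_rot_close_1[OF this, of R] show ?thesis
  proof eventually_elim
    case (elim n)
    show ?case
    proof (intro allI impI)
      fix \<zeta> a :: complex assume \<zeta>: "cmod \<zeta> = 1" and a: "cmod a \<le> R"
      have r: "cmod (rot n a - 1) < min d (1/2)"
        using elim a by blast
      then have "1/2 \<le> cmod (rot n a)" "cmod (rot n a) \<le> 2"
        using norm_triangle_ineq2[of 1 "rot n a"] norm_triangle_ineq2[of "rot n a" 1]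
        by (auto simp: norm_minus_commute)
      then have "\<zeta> * rot n a \<in> K" "\<zeta> \<in> K"
        using \<zeta> by (auto simp: K_def norm_mult)
      moreover have "\<zeta> * rot n a - \<zeta> = \<zeta> * (rot n a - 1)"
        by (simp add: algebra_simps)
      then have "dist (\<zeta> * rot n a) \<zeta> < d"
        using r \<zeta> by (simp add: dist_norm norm_mult)
      ultimately show "dist (f (\<zeta> * rot n a)) (f \<zeta>) < e"
        using d(2) by blast
    qed
  qed
qed

text \<open>What the gap \<open>n\<close> after the first \<open>P\<close> coefficients must achieve: \<open>g = scaled_OPUC \<alpha> P\<close> is
  \<open>\<epsilon>\<close>-almost constant on arcs of length \<open>2\<pi>R/n\<close>, and the first \<open>P\<close> terms of the CD kernel, measured
  against the main term \<open>|g(\<zeta>)|\<^sup>2 (z * cnj w)^k\<close> of the later ones, are an \<open>\<epsilon>\<close>-fraction of \<open>n |g(\<zeta>)|\<^sup>2\<close>.\<close>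
definition negligible_head :: "(nat \<Rightarrow> complex) \<Rightarrow> nat \<Rightarrow> real \<Rightarrow> real \<Rightarrow> nat \<Rightarrow> bool" where
  "negligible_head \<alpha> P R \<epsilon> n \<longleftrightarrow>
     (\<forall>\<zeta> a. cmod \<zeta> = 1 \<longrightarrow> cmod a \<le> R \<longrightarrow>
        cmod (scaled_OPUC \<alpha> P (\<zeta> * rot n a) - scaled_OPUC \<alpha> P \<zeta>) \<le> \<epsilon> * cmod (scaled_OPUC \<alpha> P \<zeta>)) \<and>
     (\<forall>\<zeta> a b. cmod \<zeta> = 1 \<longrightarrow> cmod a \<le> R \<longrightarrow> cmod b \<le> R \<longrightarrow>
        (\<Sum>k<P. cmod (scaled_OPUC \<alpha> k (\<zeta> * rot n a)) * cmod (scaled_OPUC \<alpha> k (\<zeta> * rot n b))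
           + (cmod (scaled_OPUC \<alpha> P \<zeta>))\<^sup>2) \<le> \<epsilon> * (cmod (scaled_OPUC \<alpha> P \<zeta>))\<^sup>2 * n)"

lemma negligible_head_closeD:
  "negligible_head \<alpha> P R \<epsilon> n \<Longrightarrow> cmod \<zeta> = 1 \<Longrightarrow> cmod a \<le> R \<Longrightarrow>
    cmod (scaled_OPUC \<alpha> P (\<zeta> * rot n a) - scaled_OPUC \<alpha> P \<zeta>) \<le> \<epsilon> * cmod (scaled_OPUC \<alpha> P \<zeta>)"
  unfolding negligible_head_def by blast

lemma negligible_head_sumD:
  "negligible_head \<alpha> P R \<epsilon> n \<Longrightarrow> cmod \<zeta> = 1 \<Longrightarrow> cmod a \<le> R \<Longrightarrow> cmod b \<le> R \<Longrightarrow>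
    (\<Sum>k<P. cmod (scaled_OPUC \<alpha> k (\<zeta> * rot n a)) * cmod (scaled_OPUC \<alpha> k (\<zeta> * rot n b))
       + (cmod (scaled_OPUC \<alpha> P \<zeta>))\<^sup>2) \<le> \<epsilon> * (cmod (scaled_OPUC \<alpha> P \<zeta>))\<^sup>2 * n"
  unfolding negligible_head_def by blast

lemma negligible_head_mono:
  "negligible_head \<alpha> P R \<epsilon> n \<Longrightarrow> R' \<le> R \<Longrightarrow> negligible_head \<alpha> P R' \<epsilon> n"
  unfolding negligible_head_def by (meson order.trans)

lemma negligible_head_cong:
  assumes "\<And>j. j < P \<Longrightarrow> \<alpha> j = \<beta> j"
  shows "negligible_head \<alpha> P R \<epsilon> n = negligible_head \<beta> P R \<epsilon> n"
proof -
  have "\<And>k. k \<le> P \<Longrightarrow> scaled_OPUC \<alpha> k = scaled_OPUC \<beta> k"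
    using assms by (intro scaled_OPUC_cong) auto
  then show ?thesis
    unfolding negligible_head_def by simp
qed

lemma eventually_scaled_OPUC_close:
  assumes "\<And>j. j < P \<Longrightarrow> cmod (\<alpha> j) < 1" "\<epsilon> > 0"
  shows "\<forall>\<^sub>F n in sequentially. \<forall>\<zeta> a. cmod \<zeta> = 1 \<longrightarrow> cmod a \<le> R \<longrightarrow>
    cmod (scaled_OPUC \<alpha> P (\<zeta> * rot n a) - scaled_OPUC \<alpha> P \<zeta>) \<le> \<epsilon> * cmod (scaled_OPUC \<alpha> P \<zeta>)"
proof -
  define c where "c = (\<Prod>j<P. 1 - cmod (\<alpha> j))"
  have "c > 0"
    unfolding c_def using assms(1) by (intro prod_pos) auto
  with assms(2) have "\<epsilon> * c > 0"
    by simp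
  from eventually_uniformly_close_on_circle[OF continuous_on_scaled_OPUC[of \<alpha> P] this, where R=R]
  show ?thesis
  proof eventually_elim
    case (elim n)
    show ?case
    proof (intro allI impI)
      fix \<zeta> a :: complex assume "cmod \<zeta> = 1" "cmod a \<le> R"
      then have "cmod (scaled_OPUC \<alpha> P (\<zeta> * rot n a) - scaled_OPUC \<alpha> P \<zeta>) < \<epsilon> * c"
        using elim by (simp add: dist_norm)
      also have "\<epsilon> * c \<le> \<epsilon> * cmod (scaled_OPUC \<alpha> P \<zeta>)"
        using assms \<open>cmod \<zeta> = 1\<close> unfolding c_def by (intro mult_left_mono norm_scaled_OPUC_ge) auto
      finally show "cmod (scaled_OPUC \<alpha> P (\<zeta> * rot n a) - scaled_OPUC \<alpha> P \<zeta>)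
          \<le> \<epsilon> * cmod (scaled_OPUC \<alpha> P \<zeta>)" by simp
    qed
  qed
qed

lemma sum_head_le_fraction:
  fixes f g :: "nat \<Rightarrow> real"
  assumes "\<And>k. k < P \<Longrightarrow> 0 \<le> f k \<and> f k \<le> U" "\<And>k. k < P \<Longrightarrow> 0 \<le> g k \<and> g k \<le> U"
    and "0 < c" "c \<le> G" "0 < \<epsilon>" "P * (U\<^sup>2 / c\<^sup>2 + 1) / \<epsilon> \<le> n"
  shows "(\<Sum>k<P. f k * g k + G\<^sup>2) \<le> \<epsilon> * G\<^sup>2 * n"
proof -
  have "(\<Sum>k<P. f k * g k + G\<^sup>2) \<le> (\<Sum>k<P. U\<^sup>2 + G\<^sup>2)"
  proof (intro sum_mono add_right_mono)
    fix k assume "k \<in> {..<P}"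
    then show "f k * g k \<le> U\<^sup>2"
      using assms(1,2)[of k] mult_mono[of "f k" U "g k" U] by (simp add: power2_eq_square)
  qed
  also have "\<dots> \<le> P * (U\<^sup>2 / c\<^sup>2 * G\<^sup>2 + G\<^sup>2)"
  proof -
    have "U\<^sup>2 * c\<^sup>2 \<le> U\<^sup>2 * G\<^sup>2"
      using assms(3,4) by (intro mult_left_mono power_mono) auto
    then have "U\<^sup>2 \<le> U\<^sup>2 / c\<^sup>2 * G\<^sup>2"
      using assms(3) by (simp add: pos_le_divide_eq mult.commute)
    then show ?thesis
      by (simp add: mult_left_mono)
  qed
  also have "\<dots> = P * (U\<^sup>2 / c\<^sup>2 + 1) * G\<^sup>2"
    by (simp add: algebra_simps)
  also have "\<dots> \<le> \<epsilon> * G\<^sup>2 * n"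
    using assms(5,6) mult_right_mono[of "P * (U\<^sup>2 / c\<^sup>2 + 1)" "\<epsilon> * n" "G\<^sup>2"]
    by (simp add: pos_divide_le_eq mult.commute mult.left_commute)
  finally show ?thesis .
qed

lemma eventually_head_sum_small:
  assumes "\<And>j. j < P \<Longrightarrow> cmod (\<alpha> j) < 1" "\<epsilon> > 0"
  shows "\<forall>\<^sub>F n in sequentially. \<forall>\<zeta> a b. cmod \<zeta> = 1 \<longrightarrow> cmod a \<le> R \<longrightarrow> cmod b \<le> R \<longrightarrow>
    (\<Sum>k<P. cmod (scaled_OPUC \<alpha> k (\<zeta> * rot n a)) * cmod (scaled_OPUC \<alpha> k (\<zeta> * rot n b))
       + (cmod (scaled_OPUC \<alpha> P \<zeta>))\<^sup>2) \<le> \<epsilon> * (cmod (scaled_OPUC \<alpha> P \<zeta>))\<^sup>2 * n"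
proof -
  define c where "c = (\<Prod>j<P. 1 - cmod (\<alpha> j))"
  have c: "c > 0" "\<And>\<zeta>. cmod \<zeta> = 1 \<Longrightarrow> c \<le> cmod (scaled_OPUC \<alpha> P \<zeta>)"
    unfolding c_def using assms(1) by (auto intro!: prod_pos norm_scaled_OPUC_ge)
  have "bounded (\<Union>k<P. scaled_OPUC \<alpha> k ` sphere 0 1)"
    by (intro bounded_UN ballI compact_imp_bounded compact_continuous_image
        continuous_on_subset[OF continuous_on_scaled_OPUC]) auto
  then obtain B where B: "\<And>k \<zeta>. k < P \<Longrightarrow> cmod \<zeta> = 1 \<Longrightarrow> cmod (scaled_OPUC \<alpha> k \<zeta>) \<le> B"
    unfolding bounded_iff by fastforce
  have "\<forall>\<^sub>F n in sequentially. \<forall>k\<in>{..<P}. \<forall>\<zeta> a. cmod \<zeta> = 1 \<longrightarrow> cmod a \<le> R \<longrightarrow>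
      dist (scaled_OPUC \<alpha> k (\<zeta> * rot n a)) (scaled_OPUC \<alpha> k \<zeta>) < 1"
    by (intro eventually_ball_finite ballI eventually_uniformly_close_on_circle continuous_on_scaled_OPUC) auto
  moreover have "\<forall>\<^sub>F n in sequentially. P * ((B + 1)\<^sup>2 / c\<^sup>2 + 1) / \<epsilon> \<le> real n"
    by (rule eventually_sequentiallyI[of "nat \<lceil>P * ((B + 1)\<^sup>2 / c\<^sup>2 + 1) / \<epsilon>\<rceil>"]) linarith
  ultimately show ?thesis
  proof eventually_elim
    case (elim n)
    have U: "cmod (scaled_OPUC \<alpha> k (\<zeta> * rot n x)) \<le> B + 1" if "k < P" "cmod \<zeta> = 1" "cmod x \<le> R" for k \<zeta> x
      using elim that B[OF that(1,2)]
        norm_triangle_ineq2[of "scaled_OPUC \<alpha> k (\<zeta> * rot n x)" "scaled_OPUC \<alpha> k \<zeta>"]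
      by (force simp: dist_norm)
    show ?case
      using U c elim assms(2) by (intro allI impI sum_head_le_fraction) auto
  qed
qed

lemma eventually_negligible_head:
  assumes "\<And>j. j < P \<Longrightarrow> cmod (\<alpha> j) < 1" "\<epsilon> > 0"
  shows "\<forall>\<^sub>F n in sequentially. negligible_head \<alpha> P R \<epsilon> n"
  using eventually_conj[OF eventually_scaled_OPUC_close[OF assms] eventually_head_sum_small[OF assms]]
  unfolding negligible_head_def .

definition CD_ratio :: "(nat \<Rightarrow> complex) \<Rightarrow> nat \<Rightarrow> complex \<Rightarrow> complex \<Rightarrow> complex \<Rightarrow> complex" where
  "CD_ratio \<alpha> n \<zeta> a b = CD_kernel \<alpha> n (\<zeta> * rot n a) (\<zeta> * rot n b) / CD_kernel \<alpha> n \<zeta> \<zeta>"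

lemma CD_kernel_rot_eq:
  assumes "cmod \<zeta> = 1"
  shows "CD_kernel \<alpha> n (\<zeta> * rot n a) (\<zeta> * rot n b) =
    (\<Sum>k<n. rot n (a - cnj b) ^ k * (scaled_OPUC \<alpha> k (\<zeta> * rot n a) * cnj (scaled_OPUC \<alpha> k (\<zeta> * rot n b))))"
proof -
  have "\<zeta> * cnj \<zeta> = 1"
    using complex_norm_square[of \<zeta>] assms by simp
  then have "\<zeta> * rot n a * cnj (\<zeta> * rot n b) = rot n (a - cnj b)"
    by (simp add: rot_mult_cnj[symmetric] algebra_simps)
  moreover have "\<zeta> \<noteq> 0"
    using assms by auto
  ultimately show ?thesis
    by (simp add: CD_kernel_eq_scaled_OPUC)
qed

lemma CD_kernel_diagonal_eq:
  assumes "cmod \<zeta> = 1"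
  shows "CD_kernel \<alpha> n \<zeta> \<zeta> = (\<Sum>k<n. scaled_OPUC \<alpha> k \<zeta> * cnj (scaled_OPUC \<alpha> k \<zeta>))"
  using CD_kernel_rot_eq[OF assms, of \<alpha> n 0 0] by simp

lemma CD_ratio_sub_geometric_mean_le_on_block:
  assumes "\<And>j. j < P \<Longrightarrow> cmod (\<alpha> j) < 1"
    and zero: "\<And>j. P \<le> j \<Longrightarrow> j < n \<Longrightarrow> j \<noteq> M \<Longrightarrow> \<alpha> j = 0"
    and "P \<le> M" "M < n" "cmod (\<alpha> M) \<le> 1/2"
    and head: "negligible_head \<alpha> P R \<epsilon> n" and "0 \<le> \<epsilon>"
    and \<zeta>: "cmod \<zeta> = 1" and ab: "cmod a \<le> R" "cmod b \<le> R"
    and \<kappa>: "\<epsilon> + 3 * (\<epsilon> + 4 * cmod (\<alpha> M) * (1 + exp (2 * pi * R))) \<le> 1/2"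
  shows "cmod (CD_ratio \<alpha> n \<zeta> a b - (\<Sum>k<n. rot n (a - cnj b) ^ k) / n)
           \<le> 4 * exp (2 * pi * (2 * R)) * (\<epsilon> + 3 * (\<epsilon> + 4 * cmod (\<alpha> M) * (1 + exp (2 * pi * R))))"
proof -
  define G where "G = scaled_OPUC \<alpha> P \<zeta>"
  define W where "W = 4 * cmod (\<alpha> M) * (1 + exp (2 * pi * R))"
  define \<tau> where "\<tau> = \<epsilon> + W"
  have "0 \<le> W"
    unfolding W_def by (intro mult_nonneg_nonneg) (auto intro: add_nonneg_nonneg)
  then have \<tau>: "0 \<le> \<tau>" "\<tau> \<le> 1" "\<epsilon> \<le> 1" "\<epsilon> + 3 * \<tau> \<le> 1/2"
    using \<kappa> assms(7) unfolding \<tau>_def W_def[symmetric] by simp_all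
  have R: "cmod (0::complex) \<le> R"
    using order.trans[OF norm_ge_zero ab(1)] by simp
  have tail: "cmod (scaled_OPUC \<alpha> k (\<zeta> * rot n x) - G) \<le> \<tau> * cmod G"
    if "cmod x \<le> R" "P \<le> k" "k < n" for x k
    unfolding G_def \<tau>_def W_def
    using zero assms(3-5) \<zeta> that \<tau>(3) negligible_head_closeD[OF head \<zeta>]
    by (intro norm_scaled_OPUC_sub_le_on_block[of P n M \<alpha>]) auto
  have Q: "cmod (rot n (a - cnj b) ^ k) \<le> exp (2 * pi * (2 * R))" if "k < n" for k
    using norm_rot_power_le[of k n "a - cnj b" "2 * R"] that ab norm_triangle_ineq4[of a "cnj b"]
    by (simp add: norm_power)
  have "cmod (CD_ratio \<alpha> n \<zeta> a b - (\<Sum>k<n. rot n (a - cnj b) ^ k) / n)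
      \<le> 4 * exp (2 * pi * (2 * R)) * (\<epsilon> + 3 * \<tau>)"
    unfolding CD_ratio_def CD_kernel_rot_eq[OF \<zeta>] CD_kernel_diagonal_eq[OF \<zeta>]
  proof (rule norm_ratio_sub_geometric_mean_le[where G = G, OF _ _ _ Q])
    show "G \<noteq> 0"
      unfolding G_def using assms(1) \<zeta> by (rule scaled_OPUC_nonzero)
    show "(\<Sum>k<P. cmod (scaled_OPUC \<alpha> k (\<zeta> * rot n a)) * cmod (scaled_OPUC \<alpha> k (\<zeta> * rot n b))
      + (cmod G)\<^sup>2) \<le> \<epsilon> * (cmod G)\<^sup>2 * n"
      unfolding G_def using negligible_head_sumD[OF head \<zeta> ab] .
    show "(\<Sum>k<P. cmod (scaled_OPUC \<alpha> k \<zeta>) * cmod (scaled_OPUC \<alpha> k \<zeta>) + (cmod G)\<^sup>2)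
      \<le> \<epsilon> * (cmod G)\<^sup>2 * n"
      unfolding G_def using negligible_head_sumD[OF head \<zeta> R R] by simp
  qed (use assms(3,4) tail[OF ab(1)] tail[OF ab(2)] tail[OF R] \<tau> in auto)
  then show ?thesis
    by (simp add: \<tau>_def W_def)
qed

lemma sparse_verblunsky_at:
  fixes N :: "nat \<Rightarrow> nat"
  assumes "strict_mono_on {1..} N" "1 \<le> l"
  shows "sparse_verblunsky v N (N l) = v l"
proof -
  have "(THE l'. 1 \<le> l' \<and> N l' = N l) = l"
    using assms strict_mono_on_imp_inj_on[OF assms(1)] by (intro the_equality) (auto dest: inj_onD)
  then show ?thesis
    using assms(2) unfolding sparse_verblunsky_def by auto
qed

lemma sparse_verblunsky_eq_0: "(\<And>l. 1 \<le> l \<Longrightarrow> N l \<noteq> k) \<Longrightarrow> sparse_verblunsky v N k = 0"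
  unfolding sparse_verblunsky_def by auto

lemma norm_sparse_verblunsky_less_1:
  fixes N :: "nat \<Rightarrow> nat"
  assumes "strict_mono_on {1..} N" "\<forall>l\<ge>1. cmod (v l) < 1"
  shows "cmod (sparse_verblunsky v N k) < 1"
proof (cases "\<exists>l\<ge>1. N l = k")
  case True
  then show ?thesis
    using sparse_verblunsky_at[OF assms(1)] assms(2) by auto
qed (auto simp: sparse_verblunsky_eq_0)

lemma sparse_verblunsky_eq_below:
  fixes N N' :: "nat \<Rightarrow> nat"
  assumes N: "strict_mono_on {1..} N" and N': "strict_mono_on {1..} N'"
    and agree: "\<And>l. 1 \<le> l \<Longrightarrow> l \<le> L \<Longrightarrow> N' l = N l" and "1 \<le> L" "k \<le> N L"
  shows "sparse_verblunsky v N' k = sparse_verblunsky v N k"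
proof -
  have small: "l \<le> L" if "strict_mono_on {1..} M" "M L = N L" "1 \<le> l" "M l = k" for M :: "nat \<Rightarrow> nat" and l
  proof (rule ccontr)
    assume "\<not> l \<le> L"
    then have "M L < M l"
      using that(3) assms(4) by (intro strict_mono_onD[OF that(1)]) auto
    then show False
      using that(2,4) assms(5) by simp
  qed
  show ?thesis
  proof (cases "\<exists>l\<ge>1. N l = k")
    case True
    then obtain l where "1 \<le> l" "N l = k" by blast
    moreover from this have "N' l = k"
      using small[OF N] agree by auto
    ultimately show ?thesis
      using sparse_verblunsky_at[OF N] sparse_verblunsky_at[OF N'] by metis
  next
    case False
    have "N' l \<noteq> k" if "1 \<le> l" for l
    proof
      assume l: "N' l = k"
      then have "l \<le> L"
        using small[OF N' agree[OF assms(4) order.refl] that] by blast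
      then show False
        using False agree that l by auto
    qed
    then show ?thesis
      using False by (simp add: sparse_verblunsky_eq_0)
  qed
qed

lemma sparse_verblunsky_eq_0_on_block:
  fixes N :: "nat \<Rightarrow> nat"
  assumes "strict_mono_on {1..} N" "1 \<le> L" "N L < k" "k < N (Suc (Suc L))" "k \<noteq> N (Suc L)"
  shows "sparse_verblunsky v N k = 0"
proof (rule sparse_verblunsky_eq_0)
  fix l :: nat assume l: "1 \<le> l"
  consider "l \<le> L" | "l = Suc L" | "Suc (Suc L) \<le> l"
    by linarith
  then show "N l \<noteq> k"
  proof cases
    case 1
    then show ?thesis
      using strict_mono_on_leD[OF assms(1), of l L] l assms(3) by simp
  next
    case 3
    then show ?thesis
      using strict_mono_on_leD[OF assms(1), of "Suc (Suc L)" l] assms(4) by simp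
  qed (use assms(5) in simp)
qed

text \<open>Some strictly increasing sequence with prefix \<open>xs\<close>; like \<open>N\<close>, it is indexed from 1.\<close>
definition extend_seq :: "nat list \<Rightarrow> nat \<Rightarrow> nat" where
  "extend_seq xs l = (if l \<le> length xs then xs ! (l - 1) else last xs + l)"

lemma extend_seq_map:
  fixes N :: "nat \<Rightarrow> nat"
  assumes "strict_mono_on {1..} N" "1 \<le> L"
  shows "\<And>l. 1 \<le> l \<Longrightarrow> l \<le> L \<Longrightarrow> extend_seq (map N [1..<Suc L]) l = N l"
    and "strict_mono_on {1..} (extend_seq (map N [1..<Suc L]))"
proof -
  show eq: "extend_seq (map N [1..<Suc L]) l = N l" if "1 \<le> l" "l \<le> L" for l
    using that by (simp add: extend_seq_def del: upt_Suc)
  show "strict_mono_on {1..} (extend_seq (map N [1..<Suc L]))"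
  proof (rule strict_mono_onI)
    fix r s :: nat assume rs: "r \<in> {1..}" "s \<in> {1..}" "r < s"
    have beyond: "extend_seq (map N [1..<Suc L]) l = N L + l" if "L < l" for l
      using that assms(2) by (simp add: extend_seq_def last_map del: upt_Suc)
    have le: "extend_seq (map N [1..<Suc L]) r \<le> N L + r"
    proof (cases "r \<le> L")
      case True
      then show ?thesis
        using eq[of r] strict_mono_on_leD[OF assms(1), of r L] rs(1) by simp
    qed (use beyond[of r] in simp)
    show "extend_seq (map N [1..<Suc L]) r < extend_seq (map N [1..<Suc L]) s"
    proof (cases "s \<le> L")
      case True
      then show ?thesis
        using eq rs strict_mono_onD[OF assms(1), of r s] by simp
    next
      case False
      then show ?thesis
        using le rs(3) beyond[of s] by (simp del: upt_Suc)
    qed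
  qed
qed

lemma exists_block:
  fixes N :: "nat \<Rightarrow> nat"
  assumes "strict_mono_on {1..} N" "1 \<le> j\<^sub>0" "N j\<^sub>0 < n"
  shows "\<exists>j\<ge>j\<^sub>0. N j < n \<and> n \<le> N (Suc j)"
proof -
  have "l - 1 \<le> N l" if "1 \<le> l" for l
    using that
  proof (induction l)
    case (Suc l)
    then show ?case
      using strict_mono_onD[OF assms(1), of l "Suc l"] by (cases "l = 0") auto
  qed simp
  then have "n \<le> N (Suc n)"
    by fastforce
  then have ex: "\<exists>l. j\<^sub>0 \<le> l \<and> n \<le> N l"
  proof (intro exI conjI)
    show "n \<le> N (max j\<^sub>0 (Suc n))"
      using \<open>n \<le> N (Suc n)\<close> strict_mono_on_leD[OF assms(1), of "Suc n" "max j\<^sub>0 (Suc n)"] by simp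
  qed simp
  define l where "l = (LEAST l. j\<^sub>0 \<le> l \<and> n \<le> N l)"
  have l: "j\<^sub>0 \<le> l" "n \<le> N l"
    using LeastI_ex[OF ex] by (simp_all add: l_def)
  then have "j\<^sub>0 < l"
    using assms(3) le_neq_implies_less by fastforce
  moreover have "N (l - 1) < n"
    using not_less_Least[of "l - 1" "\<lambda>l. j\<^sub>0 \<le> l \<and> n \<le> N l"] \<open>j\<^sub>0 < l\<close>
    by (auto simp: l_def[symmetric])
  ultimately show ?thesis
    using l by (intro exI[of _ "l - 1"]) auto
qed

text \<open>The prefix \<open>xs = [N\<^sub>1, \<dots>, N\<^sub>L]\<close> fixes the coefficients below \<open>N\<^sub>L + 1\<close>; radius \<open>L\<close> and
  accuracy \<open>1/(L + 1)\<close> improve from block to block, which makes the convergence uniform on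
  every bounded set.\<close>
definition sparsity_threshold :: "(nat \<Rightarrow> complex) \<Rightarrow> nat list \<Rightarrow> nat" where
  "sparsity_threshold v xs = (SOME T. \<forall>n\<ge>T.
     negligible_head (sparse_verblunsky v (extend_seq xs)) (Suc (last xs)) (length xs) (1 / (real (length xs) + 1)) n)"

lemma negligible_head_sparse_verblunsky:
  fixes N :: "nat \<Rightarrow> nat"
  assumes N: "strict_mono_on {1..} N" and v: "\<forall>l\<ge>1. cmod (v l) < 1"
    and thr: "\<forall>l\<ge>1. N (Suc l) > sparsity_threshold v (map N [1..<Suc l])"
    and "1 \<le> L" "N (Suc L) \<le> n"
  shows "negligible_head (sparse_verblunsky v N) (Suc (N L)) L (1 / (real L + 1)) n"
proof -
  define xs where "xs = map N [1..<Suc L]"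
  define \<alpha> where "\<alpha> = sparse_verblunsky v (extend_seq xs)"
  note ext = extend_seq_map[OF N assms(4), folded xs_def]
  have xs: "length xs = L" "last xs = N L"
    using assms(4) by (simp_all add: xs_def last_map del: upt_Suc)
  have "\<forall>\<^sub>F n in sequentially. negligible_head \<alpha> (Suc (N L)) L (1 / (real L + 1)) n"
    using norm_sparse_verblunsky_less_1[OF ext(2) v] by (intro eventually_negligible_head) (auto simp: \<alpha>_def)
  then have "\<forall>n\<ge>sparsity_threshold v xs. negligible_head \<alpha> (Suc (N L)) L (1 / (real L + 1)) n"
    unfolding sparsity_threshold_def xs \<alpha>_def[symmetric] eventually_sequentially by (rule someI_ex)
  moreover have "sparsity_threshold v xs < n"
    using thr assms(4,5) by (auto simp: xs_def)
  ultimately have "negligible_head \<alpha> (Suc (N L)) L (1 / (real L + 1)) n"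
    by simp
  moreover have "\<alpha> j = sparse_verblunsky v N j" if "j < Suc (N L)" for j
    using that ext(1) assms(4) unfolding \<alpha>_def by (intro sparse_verblunsky_eq_below[OF N ext(2)]) auto
  ultimately show ?thesis
    using negligible_head_cong[of "Suc (N L)" \<alpha> "sparse_verblunsky v N"] by simp
qed

lemma sparse_CD_ratio_sub_geometric_mean_le:
  fixes N :: "nat \<Rightarrow> nat"
  assumes N: "strict_mono_on {1..} N" and v: "\<forall>l\<ge>1. cmod (v l) < 1"
    and thr: "\<forall>l\<ge>1. N (Suc l) > sparsity_threshold v (map N [1..<Suc l])"
    and j: "2 \<le> j" "N j < n" "n \<le> N (Suc j)" "cmod (v j) \<le> 1/2" "R \<le> j - 1"
    and \<zeta>: "cmod \<zeta> = 1" and ab: "cmod a \<le> R" "cmod b \<le> R"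
    and \<kappa>: "1 / j + 3 * (1 / j + 4 * cmod (v j) * (1 + exp (2 * pi * R))) \<le> 1/2"
  shows "cmod (CD_ratio (sparse_verblunsky v N) n \<zeta> a b - (\<Sum>k<n. rot n (a - cnj b) ^ k) / n)
           \<le> 4 * exp (2 * pi * (2 * R)) * (1 / j + 3 * (1 / j + 4 * cmod (v j) * (1 + exp (2 * pi * R))))"
proof -
  define L where "L = j - 1"
  have L: "1 \<le> L" "Suc L = j" "real L + 1 = j"
    using j(1) by (auto simp: L_def)
  have vj: "sparse_verblunsky v N (N j) = v j"
    using sparse_verblunsky_at[OF N] j(1) by simp
  have "N L < N j"
    using L by (intro strict_mono_onD[OF N]) auto
  have "negligible_head (sparse_verblunsky v N) (Suc (N L)) L (1 / (real L + 1)) n"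
    using j(2) L(2) by (intro negligible_head_sparse_verblunsky[OF N v thr L(1)]) simp
  moreover have "R \<le> real L"
    using j(5) L(3) by simp
  ultimately have head: "negligible_head (sparse_verblunsky v N) (Suc (N L)) R (1 / j) n"
    using L(3) negligible_head_mono by metis
  have "cmod (CD_ratio (sparse_verblunsky v N) n \<zeta> a b - (\<Sum>k<n. rot n (a - cnj b) ^ k) / n)
      \<le> 4 * exp (2 * pi * (2 * R)) *
         (1 / j + 3 * (1 / j + 4 * cmod (sparse_verblunsky v N (N j)) * (1 + exp (2 * pi * R))))"
  proof (rule CD_ratio_sub_geometric_mean_le_on_block[OF _ _ _ _ _ head _ \<zeta> ab])
    show "sparse_verblunsky v N k = 0" if "Suc (N L) \<le> k" "k < n" "k \<noteq> N j" for k
      using that j(3) L(2) by (intro sparse_verblunsky_eq_0_on_block[OF N L(1)]) auto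
    show "cmod (sparse_verblunsky v N k) < 1" for k
      by (rule norm_sparse_verblunsky_less_1[OF N v])
    show "Suc (N L) \<le> N j" "N j < n"
      using \<open>N L < N j\<close> j(2) by simp_all
    show "cmod (sparse_verblunsky v N (N j)) \<le> 1/2" "0 \<le> 1 / real j"
      using j(4) by (simp_all add: vj)
    show "1 / j + 3 * (1 / j + 4 * cmod (sparse_verblunsky v N (N j)) * (1 + exp (2 * pi * R))) \<le> 1/2"
      using \<kappa> by (simp only: vj)
  qed
  then show ?thesis
    by (simp add: vj)
qed

lemma uniform_limit_null_blockwise:
  fixes F :: "nat \<Rightarrow> 'a \<Rightarrow> 'b::real_normed_vector" and N :: "nat \<Rightarrow> nat"
  assumes N: "strict_mono_on {1..} N" and "b \<longlonglongrightarrow> 0"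
    and "\<forall>\<^sub>F j in sequentially. \<forall>n x. N j < n \<longrightarrow> n \<le> N (Suc j) \<longrightarrow> x \<in> S \<longrightarrow> norm (F n x) \<le> b j"
  shows "uniform_limit S F (\<lambda>_. 0) sequentially"
proof (rule uniform_limitI)
  fix e :: real assume "e > 0"
  with assms(2,3) have "\<forall>\<^sub>F j in sequentially. 1 \<le> j \<and> b j < e \<and>
      (\<forall>n x. N j < n \<longrightarrow> n \<le> N (Suc j) \<longrightarrow> x \<in> S \<longrightarrow> norm (F n x) \<le> b j)"
    by (auto intro!: eventually_conj order_tendstoD(2) eventually_ge_at_top)
  then obtain j\<^sub>0 where j\<^sub>0: "\<And>j. j \<ge> j\<^sub>0 \<Longrightarrow> 1 \<le> j \<and> b j < e \<and>
      (\<forall>n x. N j < n \<longrightarrow> n \<le> N (Suc j) \<longrightarrow> x \<in> S \<longrightarrow> norm (F n x) \<le> b j)"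
    unfolding eventually_sequentially by blast
  have close: "\<forall>x\<in>S. dist (F n x) 0 < e" if n: "N j\<^sub>0 < n" for n
  proof -
    obtain j where "j \<ge> j\<^sub>0" "N j < n" "n \<le> N (Suc j)"
      using exists_block[OF N _ n] j\<^sub>0[of j\<^sub>0] by auto
    then show ?thesis
      using j\<^sub>0[of j] by fastforce
  qed
  show "\<forall>\<^sub>F n in sequentially. \<forall>x\<in>S. dist (F n x) 0 < e"
    using eventually_gt_at_top[of "N j\<^sub>0"] by eventually_elim (rule close)
qed

lemma uniform_limit_sparse_CD_ratio_sub_mean:
  fixes N :: "nat \<Rightarrow> nat" and \<Theta> :: "real set"
  assumes v: "\<forall>l\<ge>1. cmod (v l) < 1" "v \<longlonglongrightarrow> 0"
    and N: "strict_mono_on {1..} N"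
    and thr: "\<forall>l\<ge>1. N (Suc l) > sparsity_threshold v (map N [1..<Suc l])"
  shows "uniform_limit (\<Theta> \<times> cball 0 R \<times> cball 0 R)
    (\<lambda>n (\<theta>, a, b). CD_ratio (sparse_verblunsky v N) n (exp (\<i> * of_real \<theta>)) a b - (\<Sum>k<n. rot n (a - cnj b) ^ k) / n)
    (\<lambda>_. 0) sequentially"
proof (rule uniform_limit_null_blockwise[OF N])
  define \<kappa> where "\<kappa> j = 1 / real j + 3 * (1 / real j + 4 * cmod (v j) * (1 + exp (2 * pi * R)))" for j
  have v0: "(\<lambda>j. cmod (v j)) \<longlonglongrightarrow> 0"
    using v(2) by (rule tendsto_norm_zero)
  then have "\<kappa> \<longlonglongrightarrow> 0 + 3 * (0 + 4 * 0 * (1 + exp (2 * pi * R)))"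
    unfolding \<kappa>_def by (intro tendsto_add tendsto_mult tendsto_const lim_inverse_n')
  then have \<kappa>: "\<kappa> \<longlonglongrightarrow> 0"
    by simp
  then show "(\<lambda>j. 4 * exp (2 * pi * (2 * R)) * \<kappa> j) \<longlonglongrightarrow> 0"
    using tendsto_mult_right_zero by blast
  show "\<forall>\<^sub>F j in sequentially. \<forall>n x. N j < n \<longrightarrow> n \<le> N (Suc j) \<longrightarrow> x \<in> \<Theta> \<times> cball 0 R \<times> cball 0 R \<longrightarrow>
      norm ((\<lambda>(\<theta>, a, b). CD_ratio (sparse_verblunsky v N) n (exp (\<i> * of_real \<theta>)) a b
        - (\<Sum>k<n. rot n (a - cnj b) ^ k) / n) x) \<le> 4 * exp (2 * pi * (2 * R)) * \<kappa> j"
    using order_tendstoD(2)[OF \<kappa>, of "1/2", simplified] order_tendstoD(2)[OF v0, of "1/2", simplified]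
      eventually_ge_at_top[of "nat \<lceil>R\<rceil> + 2"]
  proof eventually_elim
    case (elim j)
    then have j: "2 \<le> j" "R \<le> real j - 1"
      by linarith+
    show ?case
      using sparse_CD_ratio_sub_geometric_mean_le[OF N v(1) thr j(1)] elim j
      by (auto simp: \<kappa>_def)
  qed
qed

lemma uniform_limit_sparse_CD_ratio:
  fixes N :: "nat \<Rightarrow> nat" and \<Theta> :: "real set" and C :: "complex set"
  assumes v: "\<forall>l\<ge>1. cmod (v l) < 1" "v \<longlonglongrightarrow> 0"
    and N: "strict_mono_on {1..} N"
    and thr: "\<forall>l\<ge>1. N (Suc l) > sparsity_threshold v (map N [1..<Suc l])"
    and "bounded C"
  shows "uniform_limit (\<Theta> \<times> C \<times> C)
    (\<lambda>n (\<theta>, a, b).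
       CD_kernel (sparse_verblunsky v N) n
          (exp (\<i> * (complex_of_real \<theta> + 2 * pi * a / of_nat n)))
          (exp (\<i> * (complex_of_real \<theta> + 2 * pi * b / of_nat n)))
       / CD_kernel (sparse_verblunsky v N) n
          (exp (\<i> * complex_of_real \<theta>)) (exp (\<i> * complex_of_real \<theta>)))
    (\<lambda>(\<theta>, a, b). sine_kernel (a - cnj b))
    sequentially"
proof -
  obtain R where "C \<subseteq> cball 0 R"
    using assms(5) unfolding bounded_iff by (auto simp: subset_eq)
  then have sub: "\<Theta> \<times> C \<times> C \<subseteq> \<Theta> \<times> cball 0 R \<times> cball 0 R"
    by auto
  have "(\<lambda>(\<theta>::real, a, b). a - cnj b) \<in> \<Theta> \<times> cball 0 R \<times> cball 0 R \<rightarrow> cball 0 (2 * R)"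
    using norm_triangle_ineq4 by (auto intro!: order.trans[OF norm_triangle_ineq4])
  from uniform_limit_compose'[OF uniform_limit_geometric_mean_rot this]
  have "uniform_limit (\<Theta> \<times> cball 0 R \<times> cball 0 R)
      (\<lambda>n (\<theta>, a, b). (\<Sum>k<n. rot n (a - cnj b) ^ k) / n) (\<lambda>(\<theta>, a, b). sine_kernel (a - cnj b)) sequentially"
    by (simp add: case_prod_unfold)
  from uniform_limit_add[OF uniform_limit_sparse_CD_ratio_sub_mean[OF v N thr] this]
  have "uniform_limit (\<Theta> \<times> cball 0 R \<times> cball 0 R)
      (\<lambda>n (\<theta>, a, b). CD_ratio (sparse_verblunsky v N) n (exp (\<i> * of_real \<theta>)) a b)
      (\<lambda>(\<theta>, a, b). sine_kernel (a - cnj b)) sequentially"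
    by (simp add: case_prod_unfold)
  then show ?thesis
    unfolding exp_add_rot CD_ratio_def[symmetric] by (rule uniform_limit_on_subset[OF _ sub])
qed

theorem mainTheorem5:
  fixes v :: "nat \<Rightarrow> complex"
  assumes "\<forall>l\<ge>1. cmod (v l) < 1"
    and "v \<longlonglongrightarrow> 0"
  shows "\<exists>Nhat :: nat list \<Rightarrow> nat. \<forall>N :: nat \<Rightarrow> nat.
    (strict_mono_on {1..} N \<and> (\<forall>l\<ge>1. N (Suc l) > Nhat (map N [1..<Suc l]))) \<longrightarrow>
    (\<forall>C :: complex set. compact C \<and> C \<subseteq> {w. \<bar>Im w\<bar> < 1/2} \<longrightarrow>
      uniform_limit ({0..<2*pi} \<times> C \<times> C)
        (\<lambda>n (\<theta>, a, b).
           CD_kernel (sparse_verblunsky v N) n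
              (exp (\<i> * (complex_of_real \<theta> + 2 * pi * a / of_nat n)))
              (exp (\<i> * (complex_of_real \<theta> + 2 * pi * b / of_nat n)))
           / CD_kernel (sparse_verblunsky v N) n
              (exp (\<i> * complex_of_real \<theta>)) (exp (\<i> * complex_of_real \<theta>)))
        (\<lambda>(\<theta>, a, b). sine_kernel (a - cnj b))
        sequentially)"
  by (intro exI[of _ "sparsity_threshold v"] allI impI, elim conjE,
      rule uniform_limit_sparse_CD_ratio[OF assms]) (simp_all add: compact_imp_bounded)

end
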